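(* There exists a constant $C$ such that for all $\alpha\in\mathbb{R}$ and all real $z\geq 1$, \[ \int_0^1\sup_{x\geq 0}\left|\sum_{x<n\leq x+z}e\bigl(\alpha s_Z(n)+n\theta\bigr)\right|\,d\theta\leq C z^{1/2}. \] Moreover, for every $\alpha\in\mathbb{R}\setminus\mathbb{Z}$ there exist $\eta>0$ and $C_1$ such that for all $z\geq 1$, \[ \sup_{x\geq 0}\left|\sum_{x<n\leq x+z}e\bigl(\alpha s_Z(n)\bigr)\right|\leq C_1 z^{1-\eta}. \]
   Context: Let $F_0=0$, $F_1=1$, $F_k=F_{k-1}+F_{k-2}$ be the Fibonacci numbers. Every positive integer $n$ has a unique representation $n=\sum_{i\geq 2}\varepsilon_i(n)F_i$ with $\varepsilon_i(n)\in\{0,1\}$ and $\varepsilon_i(n)=1\Rightarrow\varepsilon_{i+1}(n)=0$ (Zeckendorf). The Zeckendorf sum-of-digits is $s_Z(n)=\sum_{i\geq 2}\varepsilon_i(n)$, with $s_Z(0)=0$. $e(x)=e^{2\pi i x}$; sums range over integers $n$ in the indicated interval. *)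

theory Defs
  imports "HOL-Analysis.Analysis"
begin

fun F :: "nat \<Rightarrow> nat" where
  "F 0 = 0"
| "F (Suc 0) = 1"
| "F (Suc (Suc k)) = F (Suc k) + F k"

text \<open>A Zeckendorf digit set for n: a finite set D of indices i \<ge> 2 (the positions with
  digit 1), no two consecutive, with n = sum of F i over D.\<close>
definition zeck_rep :: "nat \<Rightarrow> nat set \<Rightarrow> bool" where
  "zeck_rep n D \<longleftrightarrow> finite D \<and> (\<forall>i\<in>D. 2 \<le> i) \<and> (\<forall>i\<in>D. Suc i \<notin> D)
     \<and> n = (\<Sum>i\<in>D. F i)"

text \<open>Zeckendorf sum of digits: number of nonzero digits of the unique representation
  (for n = 0 the unique representation is the empty set, so s_Z 0 = 0).\<close>
definition sZ :: "nat \<Rightarrow> nat" where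
  "sZ n = card (THE D. zeck_rep n D)"

definition e :: "real \<Rightarrow> complex" where
  "e x = exp (2 * pi * \<i> * complex_of_real x)"

definition S :: "real \<Rightarrow> real \<Rightarrow> real \<Rightarrow> real \<Rightarrow> complex" where
  "S \<alpha> \<theta> x z = (\<Sum>n\<in>{n::nat. x < real n \<and> real n \<le> x + z}. e (\<alpha> * real (sZ n) + real n * \<theta>))"

end

(* Self-similarity: for m < F(p+1) the Zeckendorf digits of F(p+2) + m are those of m
   together with the single digit p+2, so the sum over [F(p+2), F(p+2) + h) equals the sum
   over [0, h) times a unimodular factor. Peeling off such shifts, every sum over an interval
   of length at most F(k) is bounded by 3 (|G_0| + ... + |G_(k+2)|), uniformly in the position
   of the interval, where G_j is the sum over [0, F(j)).

   For the integral, Parseval gives that |G_j|^2 has mean F(j) over theta in [0,1], hence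
   |G_j| has mean at most sqrt F(j), and these square roots sum geometrically to O(sqrt z).

   For theta = 0 the self-similarity becomes G_(j+4) = (1 + e(alpha)) G_(j+2) + e(alpha) G_(j+1).
   Since |1 + e(alpha)| < 2 for non-integral alpha, |G_j| grows like rho^j for some rho below
   the golden ratio, i.e. like F(j)^beta with beta < 1. *)

theory Submission
  imports Defs "HOL-Number_Theory.Fib"
begin

lemma F_eq_fib [simp]: "F = fib"
proof
  fix n show "F n = fib n" by (induction n rule: fib.induct) simp_all
qed

lemma index_le_fib: "n \<le> fib n + 1"
proof (induction n rule: fib.induct)
  case (3 k)
  thus ?case using fib_neq_0_nat[of k] by (cases "k = 0") auto
qed auto

lemma fib_Suc_le_double: "1 \<le> n \<Longrightarrow> fib (Suc n) \<le> 2 * fib n"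
  using fib_Suc_mono[of "n - 1"] by (cases n) auto

lemma fib_add_5_le: "1 \<le> n \<Longrightarrow> fib (n + 5) \<le> 13 * fib n"
  using fib_Suc_le_double[of n] by (simp add: numeral_eq_Suc)

lemma fib_unbounded: "\<exists>k. x \<le> real (fib k)"
  using index_le_fib[of "nat \<lceil>x\<rceil> + 1"] by (intro exI[of _ "nat \<lceil>x\<rceil> + 1"]) linarith

lemma fib_bracket:
  fixes z :: real
  assumes "1 \<le> z"
  obtains k where "real (fib k) < z + 1" "z + 1 \<le> real (fib (Suc k))" "1 \<le> k"
proof -
  let ?P = "\<lambda>k. z + 1 \<le> real (fib k)"
  obtain n where "?P n" using fib_unbounded by blast
  moreover have "\<not> ?P 0" "\<not> ?P 1" using assms by simp_all
  ultimately obtain k where "?P k" "\<forall>i<k. \<not> ?P i"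
    using ex_least_nat_le[of ?P] by blast
  moreover from this have "k \<noteq> 0" "k \<noteq> 1" using \<open>\<not> ?P 0\<close> \<open>\<not> ?P 1\<close> by metis+
  then obtain k' where "k = Suc k'" "1 \<le> k'" by (cases k) auto
  ultimately show ?thesis using that[of k'] by auto
qed

section \<open>Zeckendorf representations\<close>

definition zeck_digits :: "nat set \<Rightarrow> bool" where
  "zeck_digits D \<longleftrightarrow> finite D \<and> (\<forall>i\<in>D. 2 \<le> i) \<and> (\<forall>i\<in>D. Suc i \<notin> D)"

lemma zeck_rep_iff: "zeck_rep n D \<longleftrightarrow> zeck_digits D \<and> n = (\<Sum>i\<in>D. fib i)"
  by (auto simp: zeck_rep_def zeck_digits_def)

lemma zeck_digits_subset: "zeck_digits D \<Longrightarrow> E \<subseteq> D \<Longrightarrow> zeck_digits E"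
  unfolding zeck_digits_def by (auto intro: finite_subset)

lemma sum_fib_less:
  assumes "zeck_digits D" "D \<subseteq> {..<j}" "1 \<le> j"
  shows "(\<Sum>i\<in>D. fib i) < fib j"
  using assms
proof (induction j arbitrary: D rule: less_induct)
  case (less j)
  show ?case
  proof (cases "j - 1 \<in> D")
    case False
    have sub: "D \<subseteq> {..<j - 1}"
    proof
      fix x assume "x \<in> D"
      with less.prems(2) False show "x \<in> {..<j - 1}" by (cases "x = j - 1") auto
    qed
    show ?thesis
    proof (cases "j = 1")
      case True
      thus ?thesis using sub by simp
    next
      case False
      hence "(\<Sum>i\<in>D. fib i) < fib (j - 1)" using less.IH[of "j - 1" D] less.prems sub by auto
      also have "\<dots> \<le> fib j" by (rule fib_mono) simp
      finally show ?thesis .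
    qed
  next
    case True
    with less.prems(1) have "3 \<le> j" unfolding zeck_digits_def by force
    then obtain t where jt: "j = t + 3" using le_Suc_ex by (metis add.commute)
    have top: "t + 2 \<in> D" using True jt by simp
    hence gap: "t + 1 \<notin> D" using less.prems(1) unfolding zeck_digits_def by force
    let ?E = "D - {t + 2}"
    have "?E \<subseteq> {..<t + 1}"
    proof
      fix x assume "x \<in> ?E"
      hence "x < t + 3" "x \<noteq> t + 2" "x \<noteq> t + 1" using less.prems(2) jt gap by auto
      thus "x \<in> {..<t + 1}" by simp
    qed
    hence "(\<Sum>i\<in>?E. fib i) < fib (t + 1)"
      using less.IH[of "t + 1" ?E] less.prems(1) jt zeck_digits_subset by auto
    moreover have "(\<Sum>i\<in>D. fib i) = fib (t + 2) + (\<Sum>i\<in>?E. fib i)"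
      using top less.prems(1) unfolding zeck_digits_def by (simp add: sum.remove)
    ultimately show ?thesis using jt by (simp add: numeral_eq_Suc)
  qed
qed

lemma zeck_rep_exists: "m < fib j \<Longrightarrow> \<exists>D. zeck_rep m D \<and> D \<subseteq> {..<j}"
proof (induction j arbitrary: m rule: less_induct)
  case (less j)
  show ?case
  proof (cases "j \<le> 2")
    case True
    hence "m = 0" using less.prems by (cases j; cases "j - 1") auto
    thus ?thesis by (intro exI[of _ "{}"]) (simp add: zeck_rep_iff zeck_digits_def)
  next
    case False
    define t where "t = j - 2"
    have jt: "j = t + 2" and t1: "1 \<le> t" using False by (simp_all add: t_def)
    show ?thesis
    proof (cases "m < fib (t + 1)")
      case True
      with less.IH[of "t + 1"] jt show ?thesis by fastforce
    next
      case False
      have "m - fib (t + 1) < fib t" using False less.prems jt by simp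
      then obtain D where D: "zeck_rep (m - fib (t + 1)) D" "D \<subseteq> {..<t}"
        using less.IH[of t] jt by auto
      have "finite D" "t + 1 \<notin> D" using D by (auto simp: zeck_rep_iff zeck_digits_def)
      hence "m = (\<Sum>i\<in>insert (t + 1) D. fib i)" using D(1) False by (auto simp: zeck_rep_iff)
      moreover have "zeck_digits (insert (t + 1) D)"
        using D t1 by (auto simp: zeck_rep_iff zeck_digits_def subset_iff)
      ultimately have "zeck_rep m (insert (t + 1) D)" by (simp add: zeck_rep_iff)
      moreover have "insert (t + 1) D \<subseteq> {..<j}" using D jt by auto
      ultimately show ?thesis by blast
    qed
  qed
qed

lemma sum_fib_less_of_max:
  assumes "zeck_digits X" "zeck_digits Y" "j \<in> X" "Y \<subseteq> {..<j}"
  shows "(\<Sum>i\<in>Y. fib i) < (\<Sum>i\<in>X. fib i)"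
proof -
  have "1 \<le> j" using assms(1,3) by (auto simp: zeck_digits_def)
  hence "(\<Sum>i\<in>Y. fib i) < fib j" using sum_fib_less assms(2,4) by blast
  also have "\<dots> \<le> (\<Sum>i\<in>X. fib i)"
    using assms(1,3) by (intro member_le_sum) (auto simp: zeck_digits_def)
  finally show ?thesis .
qed

lemma zeck_digits_sum_fib_inj:
  assumes "zeck_digits D" "zeck_digits E" "D \<subseteq> {..<j}" "E \<subseteq> {..<j}"
    and "(\<Sum>i\<in>D. fib i) = (\<Sum>i\<in>E. fib i)"
  shows "D = E"
  using assms
proof (induction j arbitrary: D E)
  case 0
  thus ?case by auto
next
  case (Suc j)
  have below: "X - {j} \<subseteq> {..<j}" if "X \<subseteq> {..<Suc j}" for X
    using that by (auto simp: less_Suc_eq)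
  have same_top: "j \<in> D \<longleftrightarrow> j \<in> E"
  proof (rule ccontr)
    have contra: False if "zeck_digits X" "zeck_digits Y" "j \<in> X" "j \<notin> Y"
      "Y \<subseteq> {..<Suc j}" "(\<Sum>i\<in>X. fib i) = (\<Sum>i\<in>Y. fib i)" for X Y
      using sum_fib_less_of_max[of X Y j] below[of Y] that by simp
    assume "\<not> (j \<in> D \<longleftrightarrow> j \<in> E)"
    thus False using contra[of D E] contra[of E D] Suc.prems by auto
  qed
  have split: "(\<Sum>i\<in>X. fib i) = (\<Sum>i\<in>X - {j}. fib i) + (if j \<in> X then fib j else 0)"
    if "finite X" for X
    using that by (simp add: sum.remove)
  have "D - {j} = E - {j}"
    using Suc.prems same_top split[of D] split[of E] below[of D] below[of E]
    by (intro Suc.IH) (auto intro: zeck_digits_subset simp: zeck_digits_def)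
  with same_top show ?case by blast
qed

lemma zeck_rep_unique: "zeck_rep n D \<Longrightarrow> zeck_rep n E \<Longrightarrow> D = E"
proof -
  assume rep: "zeck_rep n D" "zeck_rep n E"
  hence "finite (D \<union> E)" by (simp add: zeck_rep_def)
  then obtain j where "D \<union> E \<subseteq> {..<j}" using finite_nat_bounded by blast
  with rep show ?thesis by (intro zeck_digits_sum_fib_inj[of D E j]) (auto simp: zeck_rep_iff)
qed

lemma sZ_eq_card: "zeck_rep n D \<Longrightarrow> sZ n = card D"
proof -
  assume "zeck_rep n D"
  hence "(THE D. zeck_rep n D) = D" using zeck_rep_unique by (intro the_equality) blast+
  thus ?thesis by (simp add: sZ_def)
qed

lemma sZ_fib_add:
  assumes "m < fib (Suc p)"
  shows "sZ (fib (Suc (Suc p)) + m) = Suc (sZ m)"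
proof -
  obtain D where D: "zeck_rep m D" "D \<subseteq> {..<Suc p}" using zeck_rep_exists assms by blast
  have "finite D" "Suc (Suc p) \<notin> D" using D by (auto simp: zeck_rep_iff zeck_digits_def)
  moreover from this have "zeck_rep (fib (Suc (Suc p)) + m) (insert (Suc (Suc p)) D)"
    using D unfolding zeck_rep_iff zeck_digits_def by (auto simp: subset_iff)
  ultimately show ?thesis using sZ_eq_card D(1) by simp
qed

section \<open>Self-similar exponential sums\<close>

\<comment> \<open>keeps \<open>fib (Suc (Suc p))\<close> folded, as it appears in the shift identities\<close>
declare fib.simps(3) [simp del]

lemma e_add: "e (a + b) = e a * e b"
  by (simp add: e_def distrib_left exp_add)

lemma norm_e [simp]: "cmod (e a) = 1"
  by (simp add: e_def norm_exp_eq_Re)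

lemma cnj_e: "cnj (e a) = e (- a)"
  by (simp add: e_def exp_cnj)

lemma has_integral_e_linear:
  fixes k :: int
  shows "((\<lambda>\<theta>. e (c + of_int k * \<theta>)) has_integral (if k = 0 then e c else 0)) {0..1}"
proof (cases "k = 0")
  case True
  thus ?thesis using has_integral_const_real[of "e c" 0 1] by simp
next
  case False
  define a where "a = 2 * pi * \<i> * of_int k"
  have "a \<noteq> 0" using False by (simp add: a_def)
  hence "((\<lambda>x. exp (a * x) / a) has_vector_derivative exp (a * t)) (at t within {0..1})" for t
    by (intro derivative_eq_intros has_complex_derivative_imp_has_vector_derivative[unfolded o_def] | simp)+
  hence "((\<lambda>t. exp (a * of_real t)) has_integral exp (a * of_real 1) / a - exp (a * of_real 0) / a) {0..1}"
    by (intro fundamental_theorem_of_calculus) auto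
  moreover have "exp (a * of_real 1) = 1"
    using exp_plus_2pin[of 0 k] by (simp add: a_def algebra_simps)
  ultimately have "((\<lambda>t. exp (a * of_real t)) has_integral 0) {0..1}" by simp
  moreover have "e (c + of_int k * t) = e c * exp (a * of_real t)" for t
    by (simp add: e_def a_def algebra_simps flip: exp_add)
  ultimately show ?thesis using False has_integral_mult_right[of _ 0 "{0..1}" "e c"] by simp
qed

definition zeck_term :: "real \<Rightarrow> real \<Rightarrow> nat \<Rightarrow> complex" where
  "zeck_term \<alpha> \<theta> n = e (\<alpha> * real (sZ n) + real n * \<theta>)"

definition zeck_sum :: "real \<Rightarrow> real \<Rightarrow> nat \<Rightarrow> nat \<Rightarrow> complex" where
  "zeck_sum \<alpha> \<theta> lo hi = (\<Sum>n\<in>{lo..<hi}. zeck_term \<alpha> \<theta> n)"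

definition fib_block :: "real \<Rightarrow> real \<Rightarrow> nat \<Rightarrow> complex" where
  "fib_block \<alpha> \<theta> j = zeck_sum \<alpha> \<theta> 0 (fib j)"

definition fib_block_norm_sum :: "real \<Rightarrow> real \<Rightarrow> nat \<Rightarrow> real" where
  "fib_block_norm_sum \<alpha> \<theta> k = (\<Sum>i\<le>k. cmod (fib_block \<alpha> \<theta> i))"

lemma zeck_sum_split:
  "lo \<le> mid \<Longrightarrow> mid \<le> hi \<Longrightarrow> zeck_sum \<alpha> \<theta> lo hi = zeck_sum \<alpha> \<theta> lo mid + zeck_sum \<alpha> \<theta> mid hi"
  unfolding zeck_sum_def by (simp add: sum.atLeastLessThan_concat)

lemma norm_zeck_sum_le_prefixes:
  assumes "lo \<le> hi"
  shows "cmod (zeck_sum \<alpha> \<theta> lo hi) \<le> cmod (zeck_sum \<alpha> \<theta> 0 hi) + cmod (zeck_sum \<alpha> \<theta> 0 lo)"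
proof -
  have "zeck_sum \<alpha> \<theta> lo hi = zeck_sum \<alpha> \<theta> 0 hi - zeck_sum \<alpha> \<theta> 0 lo"
    using zeck_sum_split[of 0 lo hi] assms by simp
  thus ?thesis by (simp add: norm_triangle_ineq4)
qed

lemma zeck_sum_shift:
  assumes "hi \<le> fib (Suc p)"
  shows "zeck_sum \<alpha> \<theta> (fib (Suc (Suc p)) + lo) (fib (Suc (Suc p)) + hi)
    = e (\<alpha> + real (fib (Suc (Suc p))) * \<theta>) * zeck_sum \<alpha> \<theta> lo hi"
proof -
  let ?q = "fib (Suc (Suc p))"
  have "zeck_term \<alpha> \<theta> (?q + n) = e (\<alpha> + real ?q * \<theta>) * zeck_term \<alpha> \<theta> n" if "n < fib (Suc p)" for n
  proof -
    have "\<alpha> * real (sZ (?q + n)) + real (?q + n) * \<theta> = (\<alpha> + real ?q * \<theta>) + (\<alpha> * real (sZ n) + real n * \<theta>)"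
      using sZ_fib_add[OF that] by (simp add: algebra_simps)
    thus ?thesis by (simp add: zeck_term_def e_add)
  qed
  moreover have "zeck_sum \<alpha> \<theta> (?q + lo) (?q + hi) = (\<Sum>n\<in>{lo..<hi}. zeck_term \<alpha> \<theta> (?q + n))"
    unfolding zeck_sum_def using sum.shift_bounds_nat_ivl[of "zeck_term \<alpha> \<theta>" lo ?q hi]
    by (simp add: add.commute)
  ultimately show ?thesis
    using assms unfolding zeck_sum_def by (simp add: sum_distrib_left)
qed

lemma norm_zeck_sum_shift:
  "hi \<le> fib (Suc p) \<Longrightarrow>
    cmod (zeck_sum \<alpha> \<theta> (fib (Suc (Suc p)) + lo) (fib (Suc (Suc p)) + hi)) = cmod (zeck_sum \<alpha> \<theta> lo hi)"
  by (simp add: zeck_sum_shift norm_mult)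

lemma fib_block_norm_sum_nonneg: "0 \<le> fib_block_norm_sum \<alpha> \<theta> k"
  unfolding fib_block_norm_sum_def by (simp add: sum_nonneg)

lemma fib_block_norm_sum_mono: "k \<le> k' \<Longrightarrow> fib_block_norm_sum \<alpha> \<theta> k \<le> fib_block_norm_sum \<alpha> \<theta> k'"
  unfolding fib_block_norm_sum_def by (intro sum_mono2) auto

lemma fib_block_norm_sum_Suc:
  "fib_block_norm_sum \<alpha> \<theta> (Suc k) = fib_block_norm_sum \<alpha> \<theta> k + cmod (fib_block \<alpha> \<theta> (Suc k))"
  unfolding fib_block_norm_sum_def by simp

lemma norm_fib_block_le_norm_sum: "i \<le> k \<Longrightarrow> cmod (fib_block \<alpha> \<theta> i) \<le> fib_block_norm_sum \<alpha> \<theta> k"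
  unfolding fib_block_norm_sum_def by (rule member_le_sum) auto

lemma norm_zeck_sum_prefix_le:
  "t \<le> fib j \<Longrightarrow> cmod (zeck_sum \<alpha> \<theta> 0 t) \<le> fib_block_norm_sum \<alpha> \<theta> j"
proof (induction j arbitrary: t rule: less_induct)
  case (less j)
  show ?case
  proof (cases "t = fib j \<or> j \<le> 2")
    case True
    hence "t = 0 \<or> t = fib j" using less.prems by (cases j; cases "j - 1") (auto simp: fib.simps)
    thus ?thesis using norm_fib_block_le_norm_sum[of j j] fib_block_norm_sum_nonneg
      by (auto simp: fib_block_def zeck_sum_def)
  next
    case False
    then obtain q where jq: "j = Suc (Suc (Suc q))" using le_Suc_ex[of 3 j] by auto
    let ?a = "fib (Suc (Suc q))"
    show ?thesis
    proof (cases "t \<le> ?a")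
      case True
      hence "cmod (zeck_sum \<alpha> \<theta> 0 t) \<le> fib_block_norm_sum \<alpha> \<theta> (Suc (Suc q))" using less.IH jq by auto
      also have "\<dots> \<le> fib_block_norm_sum \<alpha> \<theta> j" using jq by (intro fib_block_norm_sum_mono) auto
      finally show ?thesis .
    next
      case False
      define t' where "t' = t - ?a"
      have t': "t' \<le> fib (Suc q)" and tt: "t = ?a + t'"
        using False less.prems jq fib.simps(3)[of "Suc q"] by (auto simp: t'_def)
      have "cmod (zeck_sum \<alpha> \<theta> 0 t) \<le> cmod (zeck_sum \<alpha> \<theta> 0 ?a) + cmod (zeck_sum \<alpha> \<theta> (?a + 0) (?a + t'))"
        using zeck_sum_split[of 0 ?a t] tt by (simp add: norm_triangle_ineq)
      also have "\<dots> = cmod (fib_block \<alpha> \<theta> (Suc (Suc q))) + cmod (zeck_sum \<alpha> \<theta> 0 t')"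
        using norm_zeck_sum_shift[OF t', of \<alpha> \<theta> 0] by (simp add: fib_block_def)
      also have "\<dots> \<le> cmod (fib_block \<alpha> \<theta> (Suc (Suc q))) + fib_block_norm_sum \<alpha> \<theta> (Suc q)"
        using less.IH[of "Suc q" t'] t' jq by auto
      also have "\<dots> \<le> fib_block_norm_sum \<alpha> \<theta> j"
        using jq fib_block_norm_sum_Suc[of \<alpha> \<theta> "Suc q"] fib_block_norm_sum_Suc[of \<alpha> \<theta> "Suc (Suc q)"] by simp
      finally show ?thesis .
    qed
  qed
qed

lemma norm_zeck_sum_suffix_le:
  "s \<le> fib k \<Longrightarrow> s \<le> fib i \<Longrightarrow> cmod (zeck_sum \<alpha> \<theta> (fib i - s) (fib i)) \<le> 2 * fib_block_norm_sum \<alpha> \<theta> (k + 2)"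
proof (induction i rule: less_induct)
  case (less i)
  show ?case
  proof (cases "i \<le> k + 2")
    case True
    have "cmod (zeck_sum \<alpha> \<theta> (fib i - s) (fib i)) \<le> cmod (zeck_sum \<alpha> \<theta> 0 (fib i)) + cmod (zeck_sum \<alpha> \<theta> 0 (fib i - s))"
      by (intro norm_zeck_sum_le_prefixes) simp
    also have "\<dots> \<le> 2 * fib_block_norm_sum \<alpha> \<theta> i"
      using norm_zeck_sum_prefix_le[of "fib i" i \<alpha> \<theta>] norm_zeck_sum_prefix_le[of "fib i - s" i \<alpha> \<theta>] by simp
    also have "\<dots> \<le> 2 * fib_block_norm_sum \<alpha> \<theta> (k + 2)" using fib_block_norm_sum_mono[OF True] by simp
    finally show ?thesis .
  next
    case False
    then obtain q where iq: "i = Suc (Suc (Suc q))" and kq: "k \<le> q" using le_Suc_ex[of "k + 3" i] by auto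
    have sq: "s \<le> fib (Suc q)" using less.prems(1) fib_mono[OF kq] fib_Suc_mono[of q] by linarith
    have "fib i - s = fib (Suc (Suc q)) + (fib (Suc q) - s)" "fib i = fib (Suc (Suc q)) + fib (Suc q)"
      using iq sq fib.simps(3)[of "Suc q"] by auto
    hence "cmod (zeck_sum \<alpha> \<theta> (fib i - s) (fib i)) = cmod (zeck_sum \<alpha> \<theta> (fib (Suc q) - s) (fib (Suc q)))"
      using norm_zeck_sum_shift[of "fib (Suc q)" q] by simp
    also have "\<dots> \<le> 2 * fib_block_norm_sum \<alpha> \<theta> (k + 2)" using less.IH[of "Suc q"] iq sq less.prems(1) by auto
    finally show ?thesis .
  qed
qed

lemma norm_zeck_sum_straddle_le:
  assumes "lo \<le> fib (Suc (Suc q))" "fib (Suc (Suc q)) \<le> hi" "hi - lo \<le> fib k" "k \<le> q"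
  shows "cmod (zeck_sum \<alpha> \<theta> lo hi) \<le> 3 * fib_block_norm_sum \<alpha> \<theta> (k + 2)"
proof -
  let ?a = "fib (Suc (Suc q))"
  define t where "t = hi - ?a"
  have tk: "t \<le> fib k" and tq: "t \<le> fib (Suc q)"
    using assms fib_mono[of k "Suc q"] by (auto simp: t_def)
  have "cmod (zeck_sum \<alpha> \<theta> lo hi) \<le> cmod (zeck_sum \<alpha> \<theta> (?a - (?a - lo)) ?a) + cmod (zeck_sum \<alpha> \<theta> (?a + 0) (?a + t))"
    using zeck_sum_split[of lo ?a hi] assms by (simp add: t_def norm_triangle_ineq)
  also have "\<dots> = cmod (zeck_sum \<alpha> \<theta> (?a - (?a - lo)) ?a) + cmod (zeck_sum \<alpha> \<theta> 0 t)"
    using norm_zeck_sum_shift[OF tq, of \<alpha> \<theta> 0] by simp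
  also have "\<dots> \<le> 2 * fib_block_norm_sum \<alpha> \<theta> (k + 2) + fib_block_norm_sum \<alpha> \<theta> k"
    using assms tk by (intro add_mono norm_zeck_sum_suffix_le norm_zeck_sum_prefix_le) auto
  also have "\<dots> \<le> 3 * fib_block_norm_sum \<alpha> \<theta> (k + 2)"
    using fib_block_norm_sum_mono[of k "k + 2"] by simp
  finally show ?thesis .
qed

lemma norm_zeck_sum_le:
  "lo \<le> hi \<Longrightarrow> hi \<le> fib j \<Longrightarrow> hi - lo \<le> fib k \<Longrightarrow>
    cmod (zeck_sum \<alpha> \<theta> lo hi) \<le> 3 * fib_block_norm_sum \<alpha> \<theta> (k + 2)"
proof (induction j arbitrary: lo hi rule: less_induct)
  case (less j)
  show ?case
  proof (cases "j \<le> k + 2")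
    case True
    have "cmod (zeck_sum \<alpha> \<theta> lo hi) \<le> cmod (zeck_sum \<alpha> \<theta> 0 hi) + cmod (zeck_sum \<alpha> \<theta> 0 lo)"
      using less.prems(1) by (rule norm_zeck_sum_le_prefixes)
    also have "\<dots> \<le> 2 * fib_block_norm_sum \<alpha> \<theta> j"
      using less.prems norm_zeck_sum_prefix_le[of hi j \<alpha> \<theta>] norm_zeck_sum_prefix_le[of lo j \<alpha> \<theta>] by simp
    also have "\<dots> \<le> 3 * fib_block_norm_sum \<alpha> \<theta> (k + 2)"
      using fib_block_norm_sum_mono[OF True, of \<alpha> \<theta>] fib_block_norm_sum_nonneg[of \<alpha> \<theta> "k + 2"] by simp
    finally show ?thesis .
  next
    case False
    then obtain q where jq: "j = Suc (Suc (Suc q))" and kq: "k \<le> q" using le_Suc_ex[of "k + 3" j] by auto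
    let ?a = "fib (Suc (Suc q))"
    consider "hi \<le> ?a" | "?a \<le> lo" | "lo \<le> ?a" "?a \<le> hi" by linarith
    thus ?thesis
    proof cases
      case 1
      thus ?thesis using less.IH[of "Suc (Suc q)" lo hi] less.prems jq by auto
    next
      case 2
      define lo' hi' where "lo' = lo - ?a" and "hi' = hi - ?a"
      have shifted: "lo = ?a + lo'" "hi = ?a + hi'" and hi': "hi' \<le> fib (Suc q)"
        using 2 less.prems jq fib.simps(3)[of "Suc q"] by (auto simp: lo'_def hi'_def)
      hence "cmod (zeck_sum \<alpha> \<theta> lo hi) = cmod (zeck_sum \<alpha> \<theta> lo' hi')"
        using norm_zeck_sum_shift[OF hi'] by simp
      also have "\<dots> \<le> 3 * fib_block_norm_sum \<alpha> \<theta> (k + 2)"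
        using less.IH[of "Suc q" lo' hi'] less.prems shifted hi' jq by auto
      finally show ?thesis .
    next
      case 3
      thus ?thesis using norm_zeck_sum_straddle_le less.prems(3) kq by blast
    qed
  qed
qed

lemma S_eq_zeck_sum:
  assumes "0 \<le> x" "0 \<le> z"
  shows "S \<alpha> \<theta> x z = zeck_sum \<alpha> \<theta> (nat \<lfloor>x\<rfloor> + 1) (nat \<lfloor>x + z\<rfloor> + 1)"
proof -
  have "x < real n \<and> real n \<le> x + z \<longleftrightarrow> n \<in> {nat \<lfloor>x\<rfloor> + 1..<nat \<lfloor>x + z\<rfloor> + 1}" for n
  proof -
    have "x < real n \<longleftrightarrow> \<lfloor>x\<rfloor> < int n" "real n \<le> x + z \<longleftrightarrow> int n \<le> \<lfloor>x + z\<rfloor>"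
      by (simp_all add: floor_less_iff le_floor_iff)
    thus ?thesis using assms by auto
  qed
  thus ?thesis unfolding S_def zeck_sum_def zeck_term_def by (simp only: Collect_mem_eq)
qed

lemma norm_S_le:
  assumes "0 \<le> x" "0 \<le> z" "z + 1 \<le> real (fib k)"
  shows "cmod (S \<alpha> \<theta> x z) \<le> 3 * fib_block_norm_sum \<alpha> \<theta> (k + 2)"
proof -
  define lo hi where "lo = nat \<lfloor>x\<rfloor> + 1" and "hi = nat \<lfloor>x + z\<rfloor> + 1"
  have "\<lfloor>x\<rfloor> \<le> \<lfloor>x + z\<rfloor>" using assms by (intro floor_mono) simp
  moreover have "real_of_int (\<lfloor>x + z\<rfloor> - \<lfloor>x\<rfloor>) < z + 1" by linarith
  ultimately have "lo \<le> hi" "real (hi - lo) < z + 1"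
    using assms by (auto simp: lo_def hi_def of_nat_diff)
  moreover have "hi \<le> fib (hi + 1)" using index_le_fib[of "hi + 1"] by simp
  ultimately have "cmod (zeck_sum \<alpha> \<theta> lo hi) \<le> 3 * fib_block_norm_sum \<alpha> \<theta> (k + 2)"
    using assms(3) by (intro norm_zeck_sum_le[of lo hi "hi + 1"]) linarith+
  thus ?thesis using S_eq_zeck_sum[OF assms(1,2)] by (simp add: lo_def hi_def)
qed

section \<open>The mean over \<open>\<theta>\<close>\<close>

lemma bdd_above_norm_S: "0 \<le> z \<Longrightarrow> bdd_above ((\<lambda>x. cmod (S \<alpha> \<theta> x z)) ` {0..})"
proof -
  assume "0 \<le> z"
  moreover obtain k where "z + 1 \<le> real (fib k)" using fib_unbounded by blast
  ultimately show ?thesis by (auto intro!: bdd_aboveI norm_S_le)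
qed

lemma SUP_norm_S_nonneg: "0 \<le> z \<Longrightarrow> 0 \<le> (SUP x\<in>{0::real..}. cmod (S \<alpha> \<theta> x z))"
  using cSUP_upper2[OF bdd_above_norm_S[of z \<alpha> \<theta>], of 0 0] by simp

lemma SUP_norm_S_le:
  "0 \<le> z \<Longrightarrow> z + 1 \<le> real (fib k) \<Longrightarrow>
    (SUP x\<in>{0::real..}. cmod (S \<alpha> \<theta> x z)) \<le> 3 * fib_block_norm_sum \<alpha> \<theta> (k + 2)"
  by (rule cSUP_least) (use norm_S_le[of _ z k \<alpha> \<theta>] in auto)

lemma SUP_norm_S_measurable:
  assumes "0 \<le> z"
  shows "(\<lambda>\<theta>. SUP x\<in>{0::real..}. cmod (S \<alpha> \<theta> x z)) \<in> borel_measurable (lebesgue_on {0..1})"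
proof -
  define N where "N x = {n::nat. x < real n \<and> real n \<le> x + z}" for x
  \<comment> \<open>the supremum only ranges over the countably many finite index sets \<open>N x\<close>\<close>
  have "N x \<subseteq> {..nat \<lfloor>x + z\<rfloor>}" for x by (auto simp: N_def le_nat_floor)
  hence "N ` {0..} \<subseteq> Collect finite" by (auto intro: finite_subset)
  hence "countable (N ` {0..})" using countable_Collect_finite countable_subset by blast
  moreover have "(\<lambda>\<theta>. cmod (\<Sum>n\<in>D. zeck_term \<alpha> \<theta> n)) \<in> borel_measurable (lebesgue_on {0..1})" for D
    unfolding zeck_term_def e_def
    by (intro continuous_imp_measurable_on_sets_lebesgue continuous_intros) auto
  moreover have S_N: "S \<alpha> \<theta> x z = (\<Sum>n\<in>N x. zeck_term \<alpha> \<theta> n)" for x \<theta>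
    by (simp add: S_def N_def zeck_term_def)
  ultimately have "(\<lambda>\<theta>. SUP D\<in>N ` {0..}. cmod (\<Sum>n\<in>D. zeck_term \<alpha> \<theta> n)) \<in> borel_measurable (lebesgue_on {0..1})"
    using bdd_above_norm_S[OF assms, of \<alpha>] by (intro borel_measurable_cSUP) (auto simp: image_image S_N)
  thus ?thesis by (simp add: image_image S_N)
qed

lemma continuous_on_fib_block: "continuous_on T (\<lambda>\<theta>. fib_block \<alpha> \<theta> j)"
  unfolding fib_block_def zeck_sum_def zeck_term_def e_def by (intro continuous_intros)

lemma continuous_on_fib_block_norm_sum: "continuous_on T (\<lambda>\<theta>. fib_block_norm_sum \<alpha> \<theta> k)"
  unfolding fib_block_norm_sum_def by (intro continuous_intros continuous_on_fib_block)

text \<open>Parseval: the terms of a block have distinct frequencies \<open>n\<close>, so only the diagonal survives.\<close>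

lemma has_integral_norm_fib_block_sq:
  "((\<lambda>\<theta>. (cmod (fib_block \<alpha> \<theta> j))\<^sup>2) has_integral real (fib j)) {0..1}"
proof -
  let ?N = "{0..<fib j}"
  let ?d = "\<lambda>n m. \<alpha> * (real (sZ n) - real (sZ m))"
  have "zeck_term \<alpha> \<theta> n * cnj (zeck_term \<alpha> \<theta> m) = e (?d n m + of_int (int n - int m) * \<theta>)" for \<theta> n m
    by (simp add: zeck_term_def cnj_e flip: e_add) (simp add: algebra_simps)
  hence prod: "fib_block \<alpha> \<theta> j * cnj (fib_block \<alpha> \<theta> j)
      = (\<Sum>n\<in>?N. \<Sum>m\<in>?N. e (?d n m + of_int (int n - int m) * \<theta>))" for \<theta>
    by (simp add: fib_block_def zeck_sum_def cnj_sum sum_product)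
  have "((\<lambda>\<theta>. \<Sum>n\<in>?N. \<Sum>m\<in>?N. e (?d n m + of_int (int n - int m) * \<theta>))
      has_integral (\<Sum>n\<in>?N. \<Sum>m\<in>?N. if int n - int m = 0 then e (?d n m) else 0)) {0..1}"
    by (intro has_integral_sum finite_atLeastLessThan has_integral_e_linear)
  also have "(\<Sum>n\<in>?N. \<Sum>m\<in>?N. if int n - int m = 0 then e (?d n m) else 0) = of_nat (fib j)"
    by (simp add: e_def)
  finally have "((\<lambda>\<theta>. fib_block \<alpha> \<theta> j * cnj (fib_block \<alpha> \<theta> j)) has_integral of_nat (fib j)) {0..1}"
    by (simp add: prod)
  hence "((\<lambda>\<theta>. complex_of_real ((cmod (fib_block \<alpha> \<theta> j))\<^sup>2)) has_integral of_nat (fib j)) {0..1}"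
    unfolding complex_norm_square .
  from has_integral_linear[OF this bounded_linear_Re] show ?thesis by (simp add: o_def)
qed

lemma integral_le_sqrt_of_has_integral_sq:
  fixes f :: "real \<Rightarrow> real"
  assumes "f integrable_on {0..1}" "((\<lambda>x. (f x)\<^sup>2) has_integral I) {0..1}" "0 < I"
  shows "integral {0..1} f \<le> sqrt I"
proof -
  define l where "l = sqrt I"
  have l: "0 < l" "l\<^sup>2 = I" using assms(3) by (simp_all add: l_def)
  have "f x \<le> ((f x)\<^sup>2 / l + l) / 2" for x
  proof -
    have "0 \<le> (f x - l)\<^sup>2" by simp
    hence "2 * l * f x \<le> (f x)\<^sup>2 + l\<^sup>2" by (simp add: power2_eq_square algebra_simps)
    thus ?thesis using l(1) by (simp add: field_simps power2_eq_square)
  qed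
  moreover have "((\<lambda>x. ((f x)\<^sup>2 / l + l) / 2) has_integral (I / l + l) / 2) {0..1}"
    using has_integral_const_real[of l 0 1] by (intro has_integral_divide has_integral_add assms(2)) auto
  ultimately have "integral {0..1} f \<le> (I / l + l) / 2"
    using assms(1) by (intro has_integral_le[OF integrable_integral]) auto
  also have "\<dots> = l" using l by (simp add: field_simps power2_eq_square)
  finally show ?thesis by (simp add: l_def)
qed

lemma integrable_norm_fib_block: "(\<lambda>\<theta>. cmod (fib_block \<alpha> \<theta> j)) integrable_on {0..1}"
  by (intro integrable_continuous_interval continuous_on_norm continuous_on_fib_block)

lemma integral_norm_fib_block_le: "integral {0..1} (\<lambda>\<theta>. cmod (fib_block \<alpha> \<theta> j)) \<le> sqrt (real (fib j))"
proof (cases "j = 0")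
  case True
  thus ?thesis by (simp add: fib_block_def zeck_sum_def)
next
  case False
  show ?thesis
    using fib_neq_0_nat[of j] False has_integral_norm_fib_block_sq
    by (intro integral_le_sqrt_of_has_integral_sq integrable_norm_fib_block) auto
qed

lemma integral_fib_block_norm_sum_le:
  "integral {0..1} (\<lambda>\<theta>. fib_block_norm_sum \<alpha> \<theta> k) \<le> (\<Sum>i\<le>k. sqrt (real (fib i)))"
proof -
  have "integral {0..1} (\<lambda>\<theta>. fib_block_norm_sum \<alpha> \<theta> k)
      = (\<Sum>i\<le>k. integral {0..1} (\<lambda>\<theta>. cmod (fib_block \<alpha> \<theta> i)))"
    unfolding fib_block_norm_sum_def
    by (intro integral_sum integrable_norm_fib_block) simp
  also have "\<dots> \<le> (\<Sum>i\<le>k. sqrt (real (fib i)))" by (intro sum_mono integral_norm_fib_block_le)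
  finally show ?thesis .
qed

lemma sum_sqrt_fib_le: "(\<Sum>i\<le>m. sqrt (real (fib i))) \<le> 6 * sqrt (real (fib (m + 2)))"
proof (induction m rule: less_induct)
  case (less m)
  show ?case
  proof (cases "m < 2")
    case True
    have "(1::real) \<le> 6 * sqrt 2" using real_sqrt_ge_one[of 2] by linarith
    moreover have "fib (Suc (Suc (Suc 0))) = 2" by (simp add: fib.simps)
    ultimately show ?thesis using True by (auto simp: less_2_cases_iff)
  next
    case False
    then obtain n where mn: "m = n + 2" using le_Suc_ex[of 2 m] by auto
    have "(\<Sum>i\<le>m. sqrt (real (fib i)))
        = (\<Sum>i\<le>n. sqrt (real (fib i))) + sqrt (real (fib (n + 1))) + sqrt (real (fib (n + 2)))"
      using mn by simp
    also have "\<dots> \<le> 8 * sqrt (real (fib (n + 2)))"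
    proof -
      have "sqrt (real (fib (n + 1))) \<le> sqrt (real (fib (n + 2)))" by (simp add: fib_mono)
      moreover have "(\<Sum>i\<le>n. sqrt (real (fib i))) \<le> 6 * sqrt (real (fib (n + 2)))"
        using less.IH[of n] mn by simp
      ultimately show ?thesis by linarith
    qed
    also have "\<dots> = sqrt (64 * real (fib (n + 2)))" by (simp add: real_sqrt_mult)
    \<comment> \<open>\<open>2 fib (n + 2) \<le> fib (n + 4)\<close>\<close>
    also have "\<dots> \<le> sqrt (36 * real (fib (m + 2)))"
      using mn by (simp add: fib.simps)
    also have "\<dots> = 6 * sqrt (real (fib (m + 2)))" by (simp add: real_sqrt_mult)
    finally show ?thesis .
  qed
qed

lemma integral_SUP_norm_S_le:
  fixes z \<alpha> :: real
  assumes z: "1 \<le> z"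
  defines "H \<equiv> \<lambda>\<theta>. SUP x\<in>{0::real..}. cmod (S \<alpha> \<theta> x z)"
  shows "H integrable_on {0..1} \<and> integral {0..1} H \<le> 108 * sqrt z"
proof -
  obtain k where k: "real (fib k) < z + 1" "z + 1 \<le> real (fib (Suc k))" "1 \<le> k"
    using fib_bracket[OF z] by blast
  let ?g = "\<lambda>\<theta>. 3 * fib_block_norm_sum \<alpha> \<theta> (Suc k + 2)"
  have H_le: "H \<theta> \<le> ?g \<theta>" for \<theta> using SUP_norm_S_le[of z "Suc k"] z k by (simp add: H_def)
  have g_int: "?g integrable_on {0..1}"
    by (intro integrable_continuous_interval continuous_intros continuous_on_fib_block_norm_sum)
  have H_int: "H integrable_on {0..1}"
    using SUP_norm_S_nonneg[of z] H_le z unfolding H_def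
    by (intro measurable_bounded_by_integrable_imp_integrable_real[OF SUP_norm_S_measurable g_int]) auto
  have "integral {0..1} H \<le> integral {0..1} ?g" by (intro integral_le H_int g_int H_le)
  also have "\<dots> \<le> 3 * (6 * sqrt (real (fib (k + 5))))"
    using integral_fib_block_norm_sum_le[of \<alpha> "Suc k + 2"] sum_sqrt_fib_le[of "Suc k + 2"]
    by (simp add: numeral_eq_Suc)
  also have "\<dots> \<le> 18 * sqrt (26 * z)"
    using fib_add_5_le[OF k(3)] k(1) z by (simp add: numeral_eq_Suc)
  also have "\<dots> \<le> 108 * sqrt z"
    using real_le_lsqrt[of 6 26] z by (simp add: real_sqrt_mult)
  finally show ?thesis using H_int by simp
qed

section \<open>The case \<open>\<theta> = 0\<close>\<close>

definition golden_ratio :: real where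
  "golden_ratio = (1 + sqrt 5) / 2"

lemma golden_ratio_sq: "golden_ratio\<^sup>2 = golden_ratio + 1"
  unfolding golden_ratio_def by (simp add: power2_eq_square algebra_simps)

lemma golden_ratio_bounds: "1.6 \<le> golden_ratio" "golden_ratio \<le> 1.7"
proof -
  have "2.2 \<le> sqrt (5::real)" by (rule real_le_rsqrt) (simp add: power2_eq_square)
  moreover have "sqrt (5::real) \<le> 2.4" by (rule real_le_lsqrt) (simp_all add: power2_eq_square)
  ultimately show "1.6 \<le> golden_ratio" "golden_ratio \<le> 1.7" unfolding golden_ratio_def by simp_all
qed

lemma golden_ratio_power_le_fib: "golden_ratio ^ n \<le> real (fib (n + 2))"
proof (induction n rule: fib.induct)
  case (3 n)
  have "golden_ratio ^ Suc (Suc n) = golden_ratio ^ n * golden_ratio\<^sup>2"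
    by (simp add: power2_eq_square algebra_simps)
  also have "\<dots> = golden_ratio ^ Suc n + golden_ratio ^ n"
    by (simp add: golden_ratio_sq algebra_simps)
  also have "\<dots> \<le> real (fib (Suc n + 2)) + real (fib (n + 2))" using 3 by simp
  finally show ?case by (simp add: fib.simps)
qed (use golden_ratio_bounds in \<open>simp_all add: fib.simps\<close>)

lemma exists_rate_below_golden_ratio:
  fixes c :: real
  assumes "0 \<le> c" "c < 2"
  shows "\<exists>\<rho>. 1 < \<rho> \<and> \<rho> < golden_ratio \<and> c * \<rho> + 1 \<le> \<rho> ^ 3"
proof -
  define \<epsilon> where "\<epsilon> = (2 - c) / 5"
  have \<epsilon>: "0 < \<epsilon>" "\<epsilon> \<le> 0.4" and c: "c = 2 - 5 * \<epsilon>" using assms by (auto simp: \<epsilon>_def field_simps)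
  \<comment> \<open>\<open>\<rho>\<^sup>3 - c \<rho> - 1\<close> vanishes at \<open>\<rho> = golden_ratio\<close>, \<open>c = 2\<close>; lowering \<open>c\<close> leaves room to lower \<open>\<rho>\<close>\<close>
  have "(golden_ratio - \<epsilon>) ^ 3 - c * (golden_ratio - \<epsilon>) - 1
      = \<epsilon> * (2 * golden_ratio - 1 + \<epsilon> * (3 * golden_ratio - \<epsilon> - 5))"
    using golden_ratio_sq unfolding c by algebra
  moreover have "-\<epsilon> \<le> \<epsilon> * (3 * golden_ratio - \<epsilon> - 5)"
    using \<epsilon> golden_ratio_bounds mult_left_mono[of "-1" "3 * golden_ratio - \<epsilon> - 5" \<epsilon>] by simp
  ultimately have "0 \<le> (golden_ratio - \<epsilon>) ^ 3 - c * (golden_ratio - \<epsilon>) - 1"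
    using \<epsilon> golden_ratio_bounds by simp
  thus ?thesis using \<epsilon> golden_ratio_bounds by (intro exI[of _ "golden_ratio - \<epsilon>"]) simp
qed

lemma norm_one_plus_e_less:
  assumes "\<alpha> \<notin> \<int>"
  shows "cmod (1 + e \<alpha>) < 2"
proof -
  have "cos (2 * pi * \<alpha>) \<noteq> 1"
  proof
    assume "cos (2 * pi * \<alpha>) = 1"
    then obtain n :: int where "2 * pi * \<alpha> = real_of_int n * 2 * pi" using cos_one_2pi_int by blast
    hence "\<alpha> = n" by simp
    thus False using assms by simp
  qed
  hence cos_less: "cos (2 * pi * \<alpha>) < 1" using cos_le_one[of "2 * pi * \<alpha>"] by linarith
  have "Re (e \<alpha>) = cos (2 * pi * \<alpha>)" "Im (e \<alpha>) = sin (2 * pi * \<alpha>)"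
    unfolding e_def by (simp_all add: Re_exp Im_exp)
  hence "(cmod (1 + e \<alpha>))\<^sup>2 = (1 + cos (2 * pi * \<alpha>))\<^sup>2 + (sin (2 * pi * \<alpha>))\<^sup>2"
    by (simp add: cmod_power2)
  also have "\<dots> = 2 + 2 * cos (2 * pi * \<alpha>)"
    using sin_cos_squared_add[of "2 * pi * \<alpha>"] by (simp add: power2_eq_square algebra_simps)
  also have "\<dots> < 2\<^sup>2" using cos_less by simp
  finally show ?thesis using power2_less_imp_less[of "cmod (1 + e \<alpha>)" 2] by simp
qed

lemma fib_block_Suc_Suc_Suc:
  "fib_block \<alpha> \<theta> (Suc (Suc (Suc q)))
    = fib_block \<alpha> \<theta> (Suc (Suc q)) + e (\<alpha> + real (fib (Suc (Suc q))) * \<theta>) * fib_block \<alpha> \<theta> (Suc q)"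
  using zeck_sum_split[of 0 "fib (Suc (Suc q))" "fib (Suc (Suc (Suc q)))"]
    zeck_sum_shift[of "fib (Suc q)" q \<alpha> \<theta> 0]
  by (simp add: fib_block_def fib.simps(3)[of "Suc q"])

lemma norm_fib_block_le_fib: "cmod (fib_block \<alpha> \<theta> j) \<le> real (fib j)"
  using norm_sum[of "zeck_term \<alpha> \<theta>" "{0..<fib j}"] by (simp add: fib_block_def zeck_sum_def zeck_term_def)

lemma norm_fib_block_0_le_power:
  assumes rate: "cmod (1 + e \<alpha>) * \<rho> + 1 \<le> \<rho> ^ 3" and "1 \<le> \<rho>"
  shows "cmod (fib_block \<alpha> 0 j) \<le> 2 * \<rho> ^ j"
proof (induction j rule: less_induct)
  case (less j)
  show ?case
  proof (cases "j \<le> 3")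
    case True
    have "fib j \<le> 2" using fib_mono[OF True] by (simp add: numeral_eq_Suc fib.simps)
    moreover have "1 \<le> \<rho> ^ j" using \<open>1 \<le> \<rho>\<close> by simp
    ultimately show ?thesis using norm_fib_block_le_fib[of \<alpha> 0 j] by linarith
  next
    case False
    then obtain q where jq: "j = Suc (Suc (Suc (Suc q)))" using le_Suc_ex[of 4 j] by auto
    have "fib_block \<alpha> 0 j = (1 + e \<alpha>) * fib_block \<alpha> 0 (Suc (Suc q)) + e \<alpha> * fib_block \<alpha> 0 (Suc q)"
      using jq fib_block_Suc_Suc_Suc[of \<alpha> 0 "Suc q"] fib_block_Suc_Suc_Suc[of \<alpha> 0 q] by (simp add: algebra_simps)
    hence "cmod (fib_block \<alpha> 0 j)
        \<le> cmod (1 + e \<alpha>) * cmod (fib_block \<alpha> 0 (Suc (Suc q))) + cmod (fib_block \<alpha> 0 (Suc q))"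
      by (metis norm_triangle_ineq norm_mult norm_e mult_1)
    also have "\<dots> \<le> cmod (1 + e \<alpha>) * (2 * \<rho> ^ Suc (Suc q)) + 2 * \<rho> ^ Suc q"
      using less.IH[of "Suc (Suc q)"] less.IH[of "Suc q"] jq by (intro add_mono mult_left_mono) auto
    also have "\<dots> = 2 * \<rho> ^ Suc q * (cmod (1 + e \<alpha>) * \<rho> + 1)" by (simp add: algebra_simps)
    also have "\<dots> \<le> 2 * \<rho> ^ Suc q * \<rho> ^ 3" using rate \<open>1 \<le> \<rho>\<close> by (intro mult_left_mono) auto
    also have "\<dots> = 2 * \<rho> ^ j" using jq by (simp add: numeral_eq_Suc)
    finally show ?thesis .
  qed
qed

lemma fib_block_norm_sum_0_le:
  assumes "cmod (1 + e \<alpha>) * \<rho> + 1 \<le> \<rho> ^ 3" "1 < \<rho>"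
  shows "fib_block_norm_sum \<alpha> 0 k \<le> 2 * \<rho> ^ Suc k / (\<rho> - 1)"
proof -
  have "fib_block_norm_sum \<alpha> 0 k \<le> (\<Sum>i<Suc k. 2 * \<rho> ^ i)"
    unfolding fib_block_norm_sum_def lessThan_Suc_atMost
    using norm_fib_block_0_le_power assms by (intro sum_mono) auto
  also have "\<dots> = 2 * ((\<rho> ^ Suc k - 1) / (\<rho> - 1))"
    using assms(2) by (simp add: geometric_sum[of \<rho> "Suc k"] del: sum.lessThan_Suc flip: sum_distrib_left)
  also have "\<dots> \<le> 2 * \<rho> ^ Suc k / (\<rho> - 1)" using assms(2) by (simp add: divide_right_mono)
  finally show ?thesis .
qed

lemma power_eq_powr_log:
  assumes "1 < a" "0 < \<rho>"
  shows "\<rho> ^ n = (a ^ n) powr (log a \<rho>)"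
proof -
  have "(a ^ n) powr (log a \<rho>) = (a powr log a \<rho>) powr n"
    using assms(1) by (simp add: powr_realpow[symmetric] powr_powr mult.commute)
  also have "\<dots> = \<rho> ^ n" using assms by (simp add: powr_realpow)
  finally show ?thesis ..
qed

lemma SUP_norm_S_0_le_powr:
  assumes "\<alpha> \<notin> \<int>"
  shows "\<exists>\<eta>>0. \<exists>C1::real. \<forall>z::real. z \<ge> 1 \<longrightarrow>
    (SUP x\<in>{0::real..}. cmod (S \<alpha> 0 x z)) \<le> C1 * z powr (1 - \<eta>)"
proof -
  obtain \<rho> where \<rho>: "1 < \<rho>" "\<rho> < golden_ratio" "cmod (1 + e \<alpha>) * \<rho> + 1 \<le> \<rho> ^ 3"
    using exists_rate_below_golden_ratio norm_one_plus_e_less[OF assms] by (meson norm_ge_zero)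
  have phi: "1 < golden_ratio" using golden_ratio_bounds by simp
  define \<beta> where "\<beta> = log golden_ratio \<rho>"
  have \<beta>: "0 \<le> \<beta>" "\<beta> < 1" using \<rho> phi by (simp_all add: \<beta>_def)
  define C1 where "C1 = 6 * \<rho> ^ 5 / (\<rho> - 1) * 4 powr \<beta>"
  have "(SUP x\<in>{0::real..}. cmod (S \<alpha> 0 x z)) \<le> C1 * z powr (1 - (1 - \<beta>))" if z: "1 \<le> z" for z
  proof -
    obtain k where k: "real (fib k) < z + 1" "z + 1 \<le> real (fib (Suc k))" "1 \<le> k"
      using fib_bracket[OF z] by blast
    then obtain t where kt: "k = Suc t" by (cases k) auto
    have "(SUP x\<in>{0::real..}. cmod (S \<alpha> 0 x z)) \<le> 3 * fib_block_norm_sum \<alpha> 0 (Suc k + 2)"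
      using SUP_norm_S_le[of z "Suc k"] z k by simp
    also have "\<dots> \<le> 3 * (2 * \<rho> ^ Suc (Suc k + 2) / (\<rho> - 1))"
      using fib_block_norm_sum_0_le[of \<alpha> \<rho> "Suc k + 2"] \<rho> by (intro mult_left_mono) auto
    also have "\<dots> = 6 * \<rho> ^ 5 / (\<rho> - 1) * (golden_ratio ^ t) powr \<beta>"
      using kt \<rho> phi power_eq_powr_log[of golden_ratio \<rho> t] by (simp add: \<beta>_def numeral_eq_Suc)
    also have "\<dots> \<le> 6 * \<rho> ^ 5 / (\<rho> - 1) * (4 * z) powr \<beta>"
    proof -
      have "golden_ratio ^ t \<le> real (fib (Suc k))" using golden_ratio_power_le_fib[of t] kt by simp
      also have "\<dots> \<le> 4 * z" using fib_Suc_le_double[OF k(3)] k(1) z by simp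
      finally show ?thesis using \<beta>(1) \<rho>(1) phi by (intro mult_left_mono powr_mono2) auto
    qed
    also have "\<dots> = C1 * z powr (1 - (1 - \<beta>))" using z by (simp add: C1_def powr_mult)
    finally show ?thesis .
  qed
  thus ?thesis using \<beta>(2) by (intro exI[of _ "1 - \<beta>"] exI[of _ C1]) auto
qed

theorem proposition4:
  shows "\<exists>C::real.
     (\<forall>\<alpha>::real. \<forall>z::real. z \<ge> 1 \<longrightarrow>
        (\<lambda>\<theta>. SUP x\<in>{0::real..}. cmod (S \<alpha> \<theta> x z)) integrable_on {0..1} \<and>
        integral {0..1} (\<lambda>\<theta>. SUP x\<in>{0::real..}. cmod (S \<alpha> \<theta> x z)) \<le> C * sqrt z)
   \<and> (\<forall>\<alpha>::real. \<alpha> \<notin> \<int> \<longrightarrow>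
        (\<exists>\<eta>>0. \<exists>C1::real. \<forall>z::real. z \<ge> 1 \<longrightarrow>
           (SUP x\<in>{0::real..}. cmod (S \<alpha> 0 x z)) \<le> C1 * z powr (1 - \<eta>)))"
  using integral_SUP_norm_S_le SUP_norm_S_0_le_powr by blast

end
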